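(* A descriptive $\mathsf{MS4}$-frame $\mathfrak{G}=(Y,R,E)$ validates $\mathsf{GKur}$ if and only if it satisfies the global Kuroda principle: $E[\operatorname{qmax}Y]=\operatorname{qmax}Y$ (equivalently, for every $x\in\operatorname{qmax}Y$, $E[x]\subseteq\operatorname{qmax}Y$).
   Context: $\mathsf{MIPC}$ is the smallest set of formulas in the bimodal language $\mathcal{L}_{\forall\exists}$ containing all theorems of $\mathsf{IPC}$; $\forall(p\wedge q)\leftrightarrow(\forall p\wedge\forall q)$, $\forall p\to p$, $\forall p\to\forall\forall p$; $\exists(p\vee q)\leftrightarrow(\exists p\vee\exists q)$, $p\to\exists p$, $\exists\exists p\to\exists p$, $(\exists p\wedge\exists q)\to\exists(\exists p\wedge q)$; $\exists\forall p\to\forall p$, $\exists p\to\forall\exists p$; closed under modus ponens, substitution and $\varphi/\forall\varphi$. $\mathsf{Kur}=\mathsf{MIPC}+\forall\neg\neg p\to\neg\neg\forall p$. $\mathsf{MS4}$ is the smallest set of formulas in the classical bimodal language $\mathcal{L}_{\Box\forall}$ containing all classical tautologies, the $\mathsf{S4}$ axioms for $\Box$, the $\mathsf{S5}$ axioms for $\forall$, and $\Box\forall p\to\forall\Box p$, closed under modus ponens, substitution, $\Box$- and $\forall$-necessitation. $\mathsf{GKur}=\mathsf{MS4}+\{\varphi^t:\mathsf{Kur}\vdash\varphi\}$, with $(-)^t$ the Gödel translation: $\bot^t=\bot$, $p^t=\Box p$, $(\varphi\wedge\psi)^t=\varphi^t\wedge\psi^t$, $(\varphi\vee\psi)^t=\varphi^t\vee\psi^t$,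 $(\varphi\to\psi)^t=\Box(\neg\varphi^t\vee\psi^t)$, $(\forall\varphi)^t=\Box\forall\varphi^t$, $(\exists\varphi)^t=\exists\varphi^t$ (where $\exists=\neg\forall\neg$). A descriptive $\mathsf{MS4}$-frame is $(Y,R,E)$ with $Y$ a Stone space, $R$ a continuous quasi-order, $E$ a continuous equivalence relation (continuous: $R[x]$ closed for all $x$, $R^{-1}[U]$ clopen for clopen $U$), such that $xEy$, $yRz$ imply $\exists u$ with $xRu$, $uEz$. Valuations assign clopen sets; $\Box$ is interpreted via $R$, $\forall$ via $E$. $\operatorname{qmax}Y=\{x: xRy\Rightarrow yRx\}$. *)

theory Defs
  imports "HOL-Analysis.Analysis"
begin

datatype ifm = IBot | IVar nat | IAnd ifm ifm | IOr ifm ifm | IImp ifm ifm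
  | IAll ifm | IEx ifm

definition INeg :: "ifm \<Rightarrow> ifm" where "INeg a = IImp a IBot"
definition IIff :: "ifm \<Rightarrow> ifm \<Rightarrow> ifm" where "IIff a b = IAnd (IImp a b) (IImp b a)"

primrec isubst :: "(nat \<Rightarrow> ifm) \<Rightarrow> ifm \<Rightarrow> ifm" where
  "isubst s IBot = IBot"
| "isubst s (IVar n) = s n"
| "isubst s (IAnd a b) = IAnd (isubst s a) (isubst s b)"
| "isubst s (IOr a b) = IOr (isubst s a) (isubst s b)"
| "isubst s (IImp a b) = IImp (isubst s a) (isubst s b)"
| "isubst s (IAll a) = IAll (isubst s a)"
| "isubst s (IEx a) = IEx (isubst s a)"

text \<open>Hilbert-style axiom schemes of IPC (all their instances in the bimodal language;
  together with closure under substitution this gives all theorems of IPC).\<close>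
inductive ipc_axiom :: "ifm \<Rightarrow> bool" where
  "ipc_axiom (IImp a (IImp b a))"
| "ipc_axiom (IImp (IImp a (IImp b c)) (IImp (IImp a b) (IImp a c)))"
| "ipc_axiom (IImp (IAnd a b) a)"
| "ipc_axiom (IImp (IAnd a b) b)"
| "ipc_axiom (IImp a (IImp b (IAnd a b)))"
| "ipc_axiom (IImp a (IOr a b))"
| "ipc_axiom (IImp b (IOr a b))"
| "ipc_axiom (IImp (IImp a c) (IImp (IImp b c) (IImp (IOr a b) c)))"
| "ipc_axiom (IImp IBot a)"

abbreviation "ip \<equiv> IVar 0"
abbreviation "iq \<equiv> IVar 1"

definition mipc_axioms :: "ifm set" where
  "mipc_axioms =
    { IIff (IAll (IAnd ip iq)) (IAnd (IAll ip) (IAll iq)),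
      IImp (IAll ip) ip,
      IImp (IAll ip) (IAll (IAll ip)),
      IIff (IEx (IOr ip iq)) (IOr (IEx ip) (IEx iq)),
      IImp ip (IEx ip),
      IImp (IEx (IEx ip)) (IEx ip),
      IImp (IAnd (IEx ip) (IEx iq)) (IEx (IAnd (IEx ip) iq)),
      IImp (IEx (IAll ip)) (IAll ip),
      IImp (IEx ip) (IAll (IEx ip)) }"

inductive MIPC_plus :: "ifm set \<Rightarrow> ifm \<Rightarrow> bool" for Ax :: "ifm set" where
  ipc: "ipc_axiom a \<Longrightarrow> MIPC_plus Ax a"
| ax: "a \<in> mipc_axioms \<Longrightarrow> MIPC_plus Ax a"
| extra: "a \<in> Ax \<Longrightarrow> MIPC_plus Ax a"
| mp: "MIPC_plus Ax (IImp a b) \<Longrightarrow> MIPC_plus Ax a \<Longrightarrow> MIPC_plus Ax b"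
| subst: "MIPC_plus Ax a \<Longrightarrow> MIPC_plus Ax (isubst s a)"
| nec: "MIPC_plus Ax a \<Longrightarrow> MIPC_plus Ax (IAll a)"

definition kuroda_axiom :: ifm where
  "kuroda_axiom = IImp (IAll (INeg (INeg ip))) (INeg (INeg (IAll ip)))"

definition Kur :: "ifm \<Rightarrow> bool" where
  "Kur = MIPC_plus {kuroda_axiom}"

datatype mfm = MBot | MVar nat | MNot mfm | MAnd mfm mfm | MOr mfm mfm | MImp mfm mfm
  | MBox mfm | MAll mfm

definition MEx :: "mfm \<Rightarrow> mfm" where "MEx a = MNot (MAll (MNot a))"

primrec msubst :: "(nat \<Rightarrow> mfm) \<Rightarrow> mfm \<Rightarrow> mfm" where
  "msubst s MBot = MBot"
| "msubst s (MVar n) = s n"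
| "msubst s (MNot a) = MNot (msubst s a)"
| "msubst s (MAnd a b) = MAnd (msubst s a) (msubst s b)"
| "msubst s (MOr a b) = MOr (msubst s a) (msubst s b)"
| "msubst s (MImp a b) = MImp (msubst s a) (msubst s b)"
| "msubst s (MBox a) = MBox (msubst s a)"
| "msubst s (MAll a) = MAll (msubst s a)"

text \<open>Truth-functional evaluation where variables and modalised formulas are atoms;
  classical tautologies (in the modal language) are exactly the formulas true under
  every such evaluation, i.e. substitution instances of propositional tautologies.\<close>
primrec tev :: "(mfm \<Rightarrow> bool) \<Rightarrow> mfm \<Rightarrow> bool" where
  "tev v MBot = False"
| "tev v (MVar n) = v (MVar n)"
| "tev v (MNot a) = (\<not> tev v a)"
| "tev v (MAnd a b) = (tev v a \<and> tev v b)"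
| "tev v (MOr a b) = (tev v a \<or> tev v b)"
| "tev v (MImp a b) = (tev v a \<longrightarrow> tev v b)"
| "tev v (MBox a) = v (MBox a)"
| "tev v (MAll a) = v (MAll a)"

definition tautology :: "mfm \<Rightarrow> bool" where
  "tautology a \<longleftrightarrow> (\<forall>v. tev v a)"

abbreviation "mp \<equiv> MVar 0"
abbreviation "mq \<equiv> MVar 1"

definition ms4_axioms :: "mfm set" where
  "ms4_axioms =
    { MImp (MBox (MImp mp mq)) (MImp (MBox mp) (MBox mq)),
      MImp (MBox mp) mp,
      MImp (MBox mp) (MBox (MBox mp)),
      MImp (MAll (MImp mp mq)) (MImp (MAll mp) (MAll mq)),
      MImp (MAll mp) mp,
      MImp (MAll mp) (MAll (MAll mp)),
      MImp (MEx mp) (MAll (MEx mp)),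
      MImp (MBox (MAll mp)) (MAll (MBox mp)) }"

inductive MS4_plus :: "mfm set \<Rightarrow> mfm \<Rightarrow> bool" for Ax :: "mfm set" where
  taut: "tautology a \<Longrightarrow> MS4_plus Ax a"
| ax: "a \<in> ms4_axioms \<Longrightarrow> MS4_plus Ax a"
| extra: "a \<in> Ax \<Longrightarrow> MS4_plus Ax a"
| mp: "MS4_plus Ax (MImp a b) \<Longrightarrow> MS4_plus Ax a \<Longrightarrow> MS4_plus Ax b"
| subst: "MS4_plus Ax a \<Longrightarrow> MS4_plus Ax (msubst s a)"
| nec_box: "MS4_plus Ax a \<Longrightarrow> MS4_plus Ax (MBox a)"
| nec_all: "MS4_plus Ax a \<Longrightarrow> MS4_plus Ax (MAll a)"

primrec gt :: "ifm \<Rightarrow> mfm" where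
  "gt IBot = MBot"
| "gt (IVar n) = MBox (MVar n)"
| "gt (IAnd a b) = MAnd (gt a) (gt b)"
| "gt (IOr a b) = MOr (gt a) (gt b)"
| "gt (IImp a b) = MBox (MOr (MNot (gt a)) (gt b))"
| "gt (IAll a) = MBox (MAll (gt a))"
| "gt (IEx a) = MEx (gt a)"

definition GKur :: "mfm \<Rightarrow> bool" where
  "GKur = MS4_plus (gt ` {a. Kur a})"

definition clopenin :: "'a topology \<Rightarrow> 'a set \<Rightarrow> bool" where
  "clopenin T U \<longleftrightarrow> openin T U \<and> closedin T U"

definition stone_space :: "'a topology \<Rightarrow> bool" where
  "stone_space T \<longleftrightarrow> compact_space T \<and> Hausdorff_space T \<and>
     (\<forall>U x. openin T U \<and> x \<in> U \<longrightarrow> (\<exists>C. clopenin T C \<and> x \<in> C \<and> C \<subseteq> U))"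

definition continuous_rel :: "'a topology \<Rightarrow> 'a rel \<Rightarrow> bool" where
  "continuous_rel T R \<longleftrightarrow>
     (\<forall>x\<in>topspace T. closedin T (R `` {x})) \<and>
     (\<forall>U. clopenin T U \<longrightarrow> clopenin T (R\<inverse> `` U))"

definition descriptive_MS4_frame :: "'a topology \<Rightarrow> 'a rel \<Rightarrow> 'a rel \<Rightarrow> bool" where
  "descriptive_MS4_frame T R E \<longleftrightarrow>
     stone_space T \<and>
     R \<subseteq> topspace T \<times> topspace T \<and> refl_on (topspace T) R \<and> trans R \<and>
     E \<subseteq> topspace T \<times> topspace T \<and> equiv (topspace T) E \<and>
     continuous_rel T R \<and> continuous_rel T E \<and>
     (\<forall>x y z. (x, y) \<in> E \<and> (y, z) \<in> R \<longrightarrow> (\<exists>u. (x, u) \<in> R \<and> (u, z) \<in> E))"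

primrec msat :: "'a rel \<Rightarrow> 'a rel \<Rightarrow> (nat \<Rightarrow> 'a set) \<Rightarrow> 'a \<Rightarrow> mfm \<Rightarrow> bool" where
  "msat R E V x MBot = False"
| "msat R E V x (MVar n) = (x \<in> V n)"
| "msat R E V x (MNot a) = (\<not> msat R E V x a)"
| "msat R E V x (MAnd a b) = (msat R E V x a \<and> msat R E V x b)"
| "msat R E V x (MOr a b) = (msat R E V x a \<or> msat R E V x b)"
| "msat R E V x (MImp a b) = (msat R E V x a \<longrightarrow> msat R E V x b)"
| "msat R E V x (MBox a) = (\<forall>y. (x, y) \<in> R \<longrightarrow> msat R E V y a)"
| "msat R E V x (MAll a) = (\<forall>y. (x, y) \<in> E \<longrightarrow> msat R E V y a)"

definition frame_valid :: "'a topology \<Rightarrow> 'a rel \<Rightarrow> 'a rel \<Rightarrow> mfm \<Rightarrow> bool" where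
  "frame_valid T R E a \<longleftrightarrow>
     (\<forall>V. (\<forall>n. clopenin T (V n)) \<longrightarrow> (\<forall>x\<in>topspace T. msat R E V x a))"

definition validates :: "'a topology \<Rightarrow> 'a rel \<Rightarrow> 'a rel \<Rightarrow> (mfm \<Rightarrow> bool) \<Rightarrow> bool" where
  "validates T R E L \<longleftrightarrow> (\<forall>a. L a \<longrightarrow> frame_valid T R E a)"

definition qmax :: "'a set \<Rightarrow> 'a rel \<Rightarrow> 'a set" where
  "qmax Y R = {x \<in> Y. \<forall>y. (x, y) \<in> R \<longrightarrow> (y, x) \<in> R}"

end

theory Submission
  imports Defs
begin

(* Soundness of GKur: Goedel translations are persistent along R, truth sets of clopen
   valuations are clopen (so substitution preserves validity), and every MS4 and MIPC axiom
   holds by the frame conditions; only the translated Kuroda axiom depends on the frame.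
   Every point sees a quasi-maximal point (Zorn's lemma, the chains of closed sets R[w]
   having nonempty intersection by compactness), and at a quasi-maximal point double negation
   of a translated formula collapses; so if E[qmax Y] is contained in qmax Y, forall-not-not-p
   forces forall-p at the quasi-maximal points.
   Conversely, let x be quasi-maximal, x E y, and y R z but not z R y. Separate y from R[z] by
   a clopen N and let p denote the complement of N - box dia N. The S4 theorem
   dia box (q --> box dia q) makes forall-not-not-p true at x, but forall-p fails at x since
   p fails at y. *)

lemma clopenin_empty: "clopenin T {}"
  by (simp add: clopenin_def)

lemma clopenin_topspace: "clopenin T (topspace T)"
  by (simp add: clopenin_def)

lemma clopenin_subset: "clopenin T S \<Longrightarrow> S \<subseteq> topspace T"
  by (simp add: clopenin_def closedin_subset)

lemma clopenin_Int: "clopenin T S \<Longrightarrow> clopenin T S' \<Longrightarrow> clopenin T (S \<inter> S')"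
  by (simp add: clopenin_def openin_Int closedin_Int)

lemma clopenin_Un: "clopenin T S \<Longrightarrow> clopenin T S' \<Longrightarrow> clopenin T (S \<union> S')"
  by (simp add: clopenin_def openin_Un closedin_Un)

lemma clopenin_diff: "clopenin T S \<Longrightarrow> clopenin T S' \<Longrightarrow> clopenin T (S - S')"
  by (simp add: clopenin_def openin_diff closedin_diff)

lemma subset_Zorn_dual:
  assumes "\<And>C. subset.chain A C \<Longrightarrow> \<exists>L\<in>A. \<forall>X\<in>C. L \<subseteq> X"
  shows "\<exists>M\<in>A. \<forall>X\<in>A. X \<subseteq> M \<longrightarrow> X = M"
proof -
  have "\<exists>M\<in>uminus ` A. \<forall>X\<in>uminus ` A. M \<subseteq> X \<longrightarrow> X = M"
  proof (rule subset_Zorn)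
    fix C assume "subset.chain (uminus ` A) C"
    then have "subset.chain A (uminus ` C)"
      unfolding subset_chain_def by (auto simp: image_subset_iff)
    then obtain L where "L \<in> A" "\<forall>X\<in>uminus ` C. L \<subseteq> X"
      using assms by meson
    then show "\<exists>U\<in>uminus ` A. \<forall>X\<in>C. X \<subseteq> U"
      by (metis Compl_subset_Compl_iff double_complement imageI)
  qed
  then obtain M where "M \<in> A" and "\<forall>X\<in>A. - M \<subseteq> - X \<longrightarrow> - X = - M"
    by (auto dest!: bex_imageD ball_imageD)
  then show ?thesis
    by (metis Compl_subset_Compl_iff double_complement)
qed

lemma compact_space_Inter_chain_nonempty:
  assumes "compact_space T" and "\<forall>X\<in>C. closedin T X" and "{} \<notin> C" and "chain\<^sub>\<subseteq> C"
  shows "\<Inter>C \<noteq> {}"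
proof -
  have "\<Inter>F \<noteq> {}" if "finite F" and "F \<subseteq> C" for F
  proof (cases "F = {}")
    case False
    have "subset.chain UNIV F"
      using assms(4) that(2) unfolding chain_subset_def subset_chain_def by blast
    with that(1) False have "\<Inter>F \<in> F"
      by (rule Inter_in_chain)
    then show ?thesis
      using that(2) assms(3) by auto
  qed simp
  then show ?thesis
    using assms(1,2) by (simp add: compact_space_fip)
qed

lemma ex_qmax_above:
  assumes "compact_space T" and "R \<subseteq> topspace T \<times> topspace T"
    and "refl_on (topspace T) R" and "trans R"
    and "\<And>w. w \<in> topspace T \<Longrightarrow> closedin T (R `` {w})"
    and "x \<in> topspace T"
  shows "\<exists>m\<in>qmax (topspace T) R. (x, m) \<in> R"
proof -
  have refl: "(w, w) \<in> R" if "w \<in> topspace T" for w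
    using assms(3) that by (simp add: refl_on_def)
  have trans: "(u, w) \<in> R" if "(u, v) \<in> R" "(v, w) \<in> R" for u v w
    using assms(4) that by (rule transD)
  let ?A = "{R `` {w} | w. (x, w) \<in> R}"
  have "\<exists>L\<in>?A. \<forall>X\<in>C. L \<subseteq> X" if C: "subset.chain ?A C" for C
  proof (cases "C = {}")
    case True
    then show ?thesis
      using refl assms(6) by blast
  next
    case False
    have C_sub: "C \<subseteq> ?A" and "chain\<^sub>\<subseteq> C"
      using C by (auto simp: subset_chain_def chain_subset_def)
    moreover have "\<forall>X\<in>C. closedin T X" and "{} \<notin> C"
      using C_sub assms(2,5) refl by blast+
    ultimately have "\<Inter>C \<noteq> {}"
      using assms(1) compact_space_Inter_chain_nonempty by blast
    then obtain v where v: "v \<in> \<Inter>C"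
      by blast
    obtain X0 where "X0 \<in> C"
      using False by blast
    then have "(x, v) \<in> R"
      using v C_sub trans by blast
    moreover have "R `` {v} \<subseteq> X" if "X \<in> C" for X
      using that v C_sub trans by blast
    ultimately show ?thesis
      by blast
  qed
  then obtain m where m: "(x, m) \<in> R"
    and min: "\<forall>X\<in>?A. X \<subseteq> R `` {m} \<longrightarrow> X = R `` {m}"
    using subset_Zorn_dual[of ?A] by blast
  have "(y, m) \<in> R" if "(m, y) \<in> R" for y
  proof -
    have "R `` {y} \<subseteq> R `` {m}" and "(x, y) \<in> R"
      using m that trans by blast+
    then have "R `` {y} = R `` {m}"
      using min by blast
    then show ?thesis
      using refl assms(2) m by blast
  qed
  then show ?thesis
    using m assms(2) unfolding qmax_def by blast
qed

lemma qmax_upward_closed: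
  "trans R \<Longrightarrow> R \<subseteq> Y \<times> Y \<Longrightarrow> m \<in> qmax Y R \<Longrightarrow> (m, m') \<in> R \<Longrightarrow> m' \<in> qmax Y R"
  unfolding qmax_def by (blast dest: transD)

lemma msat_tev: "tev (msat R E V x) a = msat R E V x a"
  by (induction a) auto

(* The frame condition behind the S4 theorem dia box (q --> box dia q). *)
lemma S4_dia_box_imp_box_dia:
  assumes "trans R" and "(w, w) \<in> R"
  shows "\<exists>v. (w, v) \<in> R \<and>
    (\<forall>u. (v, u) \<in> R \<longrightarrow> u \<in> N \<longrightarrow> (\<forall>s. (u, s) \<in> R \<longrightarrow> (\<exists>t. (s, t) \<in> R \<and> t \<in> N)))"
  using assms unfolding trans_def by blast

locale descriptive_frame =
  fixes T :: "'a topology" and R E :: "'a rel"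
  assumes frame: "descriptive_MS4_frame T R E"
begin

abbreviation Y :: "'a set" where "Y \<equiv> topspace T"

lemma stone: "stone_space T"
  and R_field: "R \<subseteq> Y \<times> Y" and R_refl_on: "refl_on Y R" and R_trans_rel: "trans R"
  and E_field: "E \<subseteq> Y \<times> Y" and E_equiv: "equiv Y E"
  and R_continuous: "continuous_rel T R" and E_continuous: "continuous_rel T E"
  and E_R_commute: "(x, y) \<in> E \<Longrightarrow> (y, z) \<in> R \<Longrightarrow> \<exists>u. (x, u) \<in> R \<and> (u, z) \<in> E"
  using frame unfolding descriptive_MS4_frame_def by blast+

lemma R_in_Y: "(x, y) \<in> R \<Longrightarrow> x \<in> Y \<and> y \<in> Y"
  using R_field by blast

lemma E_in_Y: "(x, y) \<in> E \<Longrightarrow> x \<in> Y \<and> y \<in> Y"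
  using E_field by blast

lemma R_refl: "x \<in> Y \<Longrightarrow> (x, x) \<in> R"
  using R_refl_on by (simp add: refl_on_def)

lemma R_trans: "(x, y) \<in> R \<Longrightarrow> (y, z) \<in> R \<Longrightarrow> (x, z) \<in> R"
  using R_trans_rel by (rule transD)

lemma E_refl: "x \<in> Y \<Longrightarrow> (x, x) \<in> E"
  using E_equiv by (simp add: equiv_def refl_on_def)

lemma E_sym: "(x, y) \<in> E \<Longrightarrow> (y, x) \<in> E"
  using E_equiv by (meson equiv_def symD)

lemma E_trans: "(x, y) \<in> E \<Longrightarrow> (y, z) \<in> E \<Longrightarrow> (x, z) \<in> E"
  using E_equiv by (meson equiv_def transD)

lemma closedin_R_image: "x \<in> Y \<Longrightarrow> closedin T (R `` {x})"
  using R_continuous unfolding continuous_rel_def by blast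

lemma clopenin_R_preimage: "clopenin T U \<Longrightarrow> clopenin T (R\<inverse> `` U)"
  using R_continuous unfolding continuous_rel_def by blast

lemma clopenin_E_preimage: "clopenin T U \<Longrightarrow> clopenin T (E\<inverse> `` U)"
  using E_continuous unfolding continuous_rel_def by blast

lemma ex_qmax_R_above: "x \<in> Y \<Longrightarrow> \<exists>m\<in>qmax Y R. (x, m) \<in> R"
  using stone R_field R_refl_on R_trans_rel closedin_R_image
  by (intro ex_qmax_above) (auto simp: stone_space_def)

lemma clopenin_msat:
  assumes V: "\<And>n. clopenin T (V n)"
  shows "clopenin T {x\<in>Y. msat R E V x a}"
proof (induction a)
  case MBot
  then show ?case by (simp add: clopenin_empty)
next
  case (MVar n)
  have "{x\<in>Y. msat R E V x (MVar n)} = V n"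
    using clopenin_subset[OF V] by auto
  then show ?case using V by simp
next
  case (MNot a)
  have "{x\<in>Y. msat R E V x (MNot a)} = Y - {x\<in>Y. msat R E V x a}"
    by auto
  then show ?case using MNot by (simp add: clopenin_diff clopenin_topspace)
next
  case (MAnd a b)
  have "{x\<in>Y. msat R E V x (MAnd a b)} = {x\<in>Y. msat R E V x a} \<inter> {x\<in>Y. msat R E V x b}"
    by auto
  then show ?case using MAnd by (simp add: clopenin_Int)
next
  case (MOr a b)
  have "{x\<in>Y. msat R E V x (MOr a b)} = {x\<in>Y. msat R E V x a} \<union> {x\<in>Y. msat R E V x b}"
    by auto
  then show ?case using MOr by (simp add: clopenin_Un)
next
  case (MImp a b)
  have "{x\<in>Y. msat R E V x (MImp a b)} = (Y - {x\<in>Y. msat R E V x a}) \<union> {x\<in>Y. msat R E V x b}"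
    by auto
  then show ?case using MImp by (simp add: clopenin_Un clopenin_diff clopenin_topspace)
next
  case (MBox a)
  have "{x\<in>Y. msat R E V x (MBox a)} = Y - R\<inverse> `` (Y - {x\<in>Y. msat R E V x a})"
    using R_in_Y by auto
  then show ?case using MBox by (simp add: clopenin_diff clopenin_topspace clopenin_R_preimage)
next
  case (MAll a)
  have "{x\<in>Y. msat R E V x (MAll a)} = Y - E\<inverse> `` (Y - {x\<in>Y. msat R E V x a})"
    using E_in_Y by auto
  then show ?case using MAll by (simp add: clopenin_diff clopenin_topspace clopenin_E_preimage)
qed

lemma msat_msubst:
  "x \<in> Y \<Longrightarrow> msat R E V x (msubst s a) \<longleftrightarrow> msat R E (\<lambda>n. {y\<in>Y. msat R E V y (s n)}) x a"
proof (induction a arbitrary: x)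
  case (MBox a)
  then show ?case using R_in_Y by auto
next
  case (MAll a)
  then show ?case using E_in_Y by auto
qed auto

lemma msat_gt_IImp:
  "msat R E V x (gt (IImp a b)) \<longleftrightarrow>
    (\<forall>y. (x, y) \<in> R \<longrightarrow> msat R E V y (gt a) \<longrightarrow> msat R E V y (gt b))"
  by auto

lemma msat_gt_INeg:
  "msat R E V x (gt (INeg a)) \<longleftrightarrow> (\<forall>y. (x, y) \<in> R \<longrightarrow> \<not> msat R E V y (gt a))"
  by (auto simp: INeg_def)

lemma msat_gt_IAll:
  "msat R E V x (gt (IAll a)) \<longleftrightarrow> (\<forall>y z. (x, y) \<in> R \<longrightarrow> (y, z) \<in> E \<longrightarrow> msat R E V z (gt a))"
  by auto

lemma msat_gt_IEx:
  "msat R E V x (gt (IEx a)) \<longleftrightarrow> (\<exists>y. (x, y) \<in> E \<and> msat R E V y (gt a))"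
  by (auto simp: MEx_def)

lemma msat_gt_R_mono:
  "(x, y) \<in> R \<Longrightarrow> msat R E V x (gt a) \<Longrightarrow> msat R E V y (gt a)"
proof (induction a arbitrary: x y)
  case (IEx a)
  then obtain z where z: "(x, z) \<in> E" "msat R E V z (gt a)"
    by (auto simp: MEx_def)
  obtain u where u: "(z, u) \<in> R" "(u, y) \<in> E"
    using E_R_commute[OF E_sym[OF z(1)] IEx.prems(1)] by blast
  have "msat R E V u (gt a)"
    using IEx.IH u z by blast
  then show ?case
    using E_sym[OF u(2)] by (auto simp: MEx_def)
qed (auto dest: R_trans)

lemma msat_gt_isubst:
  "x \<in> Y \<Longrightarrow> msat R E V x (gt (isubst s a)) \<longleftrightarrow> msat R E V x (msubst (gt \<circ> s) (gt a))"
proof (induction a arbitrary: x)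
  case (IVar n)
  have "msat R E V x (gt (s n)) \<longleftrightarrow> (\<forall>y. (x, y) \<in> R \<longrightarrow> msat R E V y (gt (s n)))"
    using R_refl[OF IVar.prems] msat_gt_R_mono by blast
  then show ?case by simp
next
  case (IImp a b)
  then show ?case using R_in_Y by auto
next
  case (IAll a)
  then show ?case using R_in_Y E_in_Y by auto
next
  case (IEx a)
  then show ?case using E_in_Y by (auto simp: MEx_def)
qed auto

lemma frame_valid_msubst:
  assumes valid: "frame_valid T R E a"
  shows "frame_valid T R E (msubst s a)"
  unfolding frame_valid_def
proof (intro allI impI ballI)
  fix V :: "nat \<Rightarrow> 'a set" and x
  assume V: "\<forall>n. clopenin T (V n)" and x: "x \<in> Y"
  define W where "W = (\<lambda>n. {y\<in>Y. msat R E V y (s n)})"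
  have "\<forall>n. clopenin T (W n)"
    unfolding W_def using clopenin_msat V by blast
  then have "msat R E W x a"
    using valid x unfolding frame_valid_def by blast
  then show "msat R E V x (msubst s a)"
    using msat_msubst x unfolding W_def by blast
qed

lemma frame_valid_gt_isubst:
  "frame_valid T R E (gt a) \<Longrightarrow> frame_valid T R E (gt (isubst s a))"
  using frame_valid_msubst[of "gt a" "gt \<circ> s"] msat_gt_isubst
  unfolding frame_valid_def by blast

lemma msat_gt_ipc_axiom: "ipc_axiom a \<Longrightarrow> msat R E V x (gt a)"
proof (induction rule: ipc_axiom.induct)
  case (2 a b c)
  show ?case
    unfolding msat_gt_IImp
  proof (intro allI impI)
    fix x1 x2 x3
    assume "(x, x1) \<in> R" "(x1, x2) \<in> R" "(x2, x3) \<in> R"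
      and "\<forall>y. (x1, y) \<in> R \<longrightarrow> msat R E V y (gt a) \<longrightarrow>
        (\<forall>z. (y, z) \<in> R \<longrightarrow> msat R E V z (gt b) \<longrightarrow> msat R E V z (gt c))"
      and "\<forall>y. (x2, y) \<in> R \<longrightarrow> msat R E V y (gt a) \<longrightarrow> msat R E V y (gt b)"
      and "msat R E V x3 (gt a)"
    moreover have "(x3, x3) \<in> R" "(x1, x3) \<in> R"
      using R_in_Y R_refl R_trans calculation by blast+
    ultimately show "msat R E V x3 (gt c)"
      by blast
  qed
next
  case (8 a c b)
  show ?case
    unfolding msat_gt_IImp
  proof (intro allI impI)
    fix x1 x2 x3
    assume "(x, x1) \<in> R" "(x1, x2) \<in> R" "(x2, x3) \<in> R"
      and "\<forall>y. (x1, y) \<in> R \<longrightarrow> msat R E V y (gt a) \<longrightarrow> msat R E V y (gt c)"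
      and "\<forall>y. (x2, y) \<in> R \<longrightarrow> msat R E V y (gt b) \<longrightarrow> msat R E V y (gt c)"
      and "msat R E V x3 (gt (IOr a b))"
    moreover have "(x3, x3) \<in> R" "(x1, x3) \<in> R"
      using R_in_Y R_refl R_trans calculation by blast+
    ultimately show "msat R E V x3 (gt c)"
      by auto
  qed
qed (simp_all add: msat_gt_IImp, (blast dest: msat_gt_R_mono)+)

lemma msat_gt_all_imp_all_all: "msat R E V x (gt (IImp (IAll ip) (IAll (IAll ip))))"
  unfolding msat_gt_IImp msat_gt_IAll
proof (intro allI impI)
  fix x1 y1 z1 y2 z2
  assume all: "\<forall>y z. (x1, y) \<in> R \<longrightarrow> (y, z) \<in> E \<longrightarrow> msat R E V z (gt ip)"
    and "(x1, y1) \<in> R" "(y1, z1) \<in> E" "(z1, y2) \<in> R" "(y2, z2) \<in> E"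
  then obtain u where "(y1, u) \<in> R" "(u, y2) \<in> E"
    using E_R_commute by blast
  then have "(x1, u) \<in> R" "(u, z2) \<in> E"
    using \<open>(x1, y1) \<in> R\<close> \<open>(y2, z2) \<in> E\<close> R_trans E_trans by blast+
  then show "msat R E V z2 (gt ip)"
    using all by blast
qed

lemma msat_gt_ex_all_imp_all: "msat R E V x (gt (IImp (IEx (IAll ip)) (IAll ip)))"
  unfolding msat_gt_IImp msat_gt_IAll msat_gt_IEx
proof (intro allI impI)
  fix x1 y z
  assume "\<exists>e. (x1, e) \<in> E \<and> (\<forall>y z. (e, y) \<in> R \<longrightarrow> (y, z) \<in> E \<longrightarrow> msat R E V z (gt ip))"
    and "(x1, y) \<in> R" "(y, z) \<in> E"
  then obtain e where e: "(x1, e) \<in> E" and all: "\<forall>y z. (e, y) \<in> R \<longrightarrow> (y, z) \<in> E \<longrightarrow> msat R E V z (gt ip)"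
    by blast
  obtain u where "(e, u) \<in> R" "(u, y) \<in> E"
    using E_R_commute[OF E_sym[OF e] \<open>(x1, y) \<in> R\<close>] by blast
  moreover have "(u, z) \<in> E"
    using \<open>(u, y) \<in> E\<close> \<open>(y, z) \<in> E\<close> by (rule E_trans)
  ultimately show "msat R E V z (gt ip)"
    using all by blast
qed

lemma msat_gt_ex_imp_all_ex: "msat R E V x (gt (IImp (IEx ip) (IAll (IEx ip))))"
  unfolding msat_gt_IImp msat_gt_IAll
proof (intro allI impI)
  fix x1 y z
  assume "msat R E V x1 (gt (IEx ip))" "(x1, y) \<in> R" "(y, z) \<in> E"
  then have "msat R E V y (gt (IEx ip))"
    using msat_gt_R_mono by blast
  then obtain e where "(y, e) \<in> E" "msat R E V e (gt ip)"
    unfolding msat_gt_IEx by blast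
  then show "msat R E V z (gt (IEx ip))"
    unfolding msat_gt_IEx using \<open>(y, z) \<in> E\<close> E_sym E_trans by blast
qed

lemma msat_gt_mipc_axiom:
  assumes "a \<in> mipc_axioms" and "x \<in> Y"
  shows "msat R E V x (gt a)"
proof -
  have "msat R E V x (gt (IIff (IAll (IAnd ip iq)) (IAnd (IAll ip) (IAll iq))))"
    by (simp add: IIff_def) blast
  moreover have "msat R E V x (gt (IImp (IAll ip) ip))"
    using \<open>x \<in> Y\<close> by (simp add: msat_gt_IImp msat_gt_IAll) (meson R_in_Y R_refl E_refl)
  moreover have "msat R E V x (gt (IIff (IEx (IOr ip iq)) (IOr (IEx ip) (IEx iq))))"
    by (simp add: IIff_def MEx_def) blast
  moreover have "msat R E V x (gt (IImp ip (IEx ip)))"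
    unfolding msat_gt_IImp msat_gt_IEx using R_in_Y E_refl by blast
  moreover have "msat R E V x (gt (IImp (IEx (IEx ip)) (IEx ip)))"
    unfolding msat_gt_IImp msat_gt_IEx using E_trans by blast
  moreover have "msat R E V x (gt (IImp (IAnd (IEx ip) (IEx iq)) (IEx (IAnd (IEx ip) iq))))"
    unfolding msat_gt_IImp gt.simps(3) msat.simps(4) msat_gt_IEx by (meson E_sym E_trans)
  ultimately show ?thesis
    using assms(1) msat_gt_all_imp_all_all msat_gt_ex_all_imp_all msat_gt_ex_imp_all_ex
    unfolding mipc_axioms_def by blast
qed

lemma msat_ms4_axiom:
  assumes "a \<in> ms4_axioms" and "x \<in> Y"
  shows "msat R E V x a"
proof -
  have "msat R E V x (MImp (MBox (MImp mp mq)) (MImp (MBox mp) (MBox mq)))"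
    by simp
  moreover have "msat R E V x (MImp (MBox mp) mp)"
    using \<open>x \<in> Y\<close> by (simp add: R_refl)
  moreover have "msat R E V x (MImp (MBox mp) (MBox (MBox mp)))"
    by (simp add: R_trans)
  moreover have "msat R E V x (MImp (MAll (MImp mp mq)) (MImp (MAll mp) (MAll mq)))"
    by simp
  moreover have "msat R E V x (MImp (MAll mp) mp)"
    using \<open>x \<in> Y\<close> by (simp add: E_refl)
  moreover have "msat R E V x (MImp (MAll mp) (MAll (MAll mp)))"
    by (simp add: E_trans)
  moreover have "msat R E V x (MImp (MEx mp) (MAll (MEx mp)))"
    by (simp add: MEx_def) (meson E_sym E_trans)
  moreover have "msat R E V x (MImp (MBox (MAll mp)) (MAll (MBox mp)))"
    by simp (meson E_R_commute)
  ultimately show ?thesis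
    using assms(1) unfolding ms4_axioms_def by blast
qed

lemma frame_valid_gt_MIPC_plus:
  assumes "\<forall>b\<in>Ax. frame_valid T R E (gt b)" and "MIPC_plus Ax a"
  shows "frame_valid T R E (gt a)"
  using assms(2)
proof (induction rule: MIPC_plus.induct)
  case (ipc a)
  then show ?case
    using msat_gt_ipc_axiom unfolding frame_valid_def by blast
next
  case (ax a)
  then show ?case
    using msat_gt_mipc_axiom unfolding frame_valid_def by blast
next
  case (extra a)
  then show ?case
    using assms(1) by blast
next
  case (mp a b)
  then show ?case
    using R_refl unfolding frame_valid_def msat_gt_IImp by blast
next
  case (subst a s)
  show ?case
    using subst.IH by (rule frame_valid_gt_isubst)
next
  case (nec a)
  then show ?case
    using E_in_Y unfolding frame_valid_def msat_gt_IAll by blast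
qed

lemma frame_valid_MS4_plus:
  assumes "\<forall>b\<in>Ax. frame_valid T R E b" and "MS4_plus Ax a"
  shows "frame_valid T R E a"
  using assms(2)
proof (induction rule: MS4_plus.induct)
  case (taut a)
  then show ?case
    using msat_tev unfolding frame_valid_def tautology_def by metis
next
  case (ax a)
  then show ?case
    using msat_ms4_axiom unfolding frame_valid_def by blast
next
  case (extra a)
  then show ?case
    using assms(1) by blast
next
  case (mp a b)
  then show ?case
    unfolding frame_valid_def by simp
next
  case (subst a s)
  show ?case
    using subst.IH by (rule frame_valid_msubst)
next
  case (nec_box a)
  then show ?case
    using R_in_Y unfolding frame_valid_def by simp
next
  case (nec_all a)
  then show ?case
    using E_in_Y unfolding frame_valid_def by simp
qed

lemma validates_GKur_iff: "validates T R E GKur \<longleftrightarrow> frame_valid T R E (gt kuroda_axiom)"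
proof
  assume "validates T R E GKur"
  moreover have "GKur (gt kuroda_axiom)"
    unfolding GKur_def Kur_def by (auto intro: MS4_plus.extra MIPC_plus.extra)
  ultimately show "frame_valid T R E (gt kuroda_axiom)"
    unfolding validates_def by blast
next
  assume "frame_valid T R E (gt kuroda_axiom)"
  then have "\<forall>b\<in>gt ` {a. Kur a}. frame_valid T R E b"
    using frame_valid_gt_MIPC_plus[of "{kuroda_axiom}"] unfolding Kur_def by blast
  then show "validates T R E GKur"
    using frame_valid_MS4_plus unfolding validates_def GKur_def by blast
qed

lemma msat_gt_not_not_at_qmax:
  assumes "e \<in> qmax Y R" and "msat R E V e (gt (INeg (INeg a)))"
  shows "msat R E V e (gt a)"
proof -
  have "(e, e) \<in> R"
    using assms(1) R_refl unfolding qmax_def by blast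
  then obtain v where v: "(e, v) \<in> R" "msat R E V v (gt a)"
    using assms(2) unfolding msat_gt_INeg by blast
  then have "(v, e) \<in> R"
    using assms(1) unfolding qmax_def by blast
  then show ?thesis
    using v(2) by (rule msat_gt_R_mono)
qed

lemma frame_valid_gt_kuroda_if_E_qmax:
  assumes "E `` qmax Y R \<subseteq> qmax Y R"
  shows "frame_valid T R E (gt kuroda_axiom)"
  unfolding frame_valid_def kuroda_axiom_def msat_gt_IImp
proof (intro allI impI ballI)
  fix V x x1
  assume nn: "msat R E V x1 (gt (IAll (INeg (INeg ip))))" and "(x, x1) \<in> R"
  show "msat R E V x1 (gt (INeg (INeg (IAll ip))))"
    unfolding msat_gt_INeg
  proof (intro allI impI notI)
    fix y assume "(x1, y) \<in> R" and no_all: "\<forall>z. (y, z) \<in> R \<longrightarrow> \<not> msat R E V z (gt (IAll ip))"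
    obtain m where m: "m \<in> qmax Y R" "(y, m) \<in> R"
      using ex_qmax_R_above R_in_Y \<open>(x1, y) \<in> R\<close> by blast
    have "msat R E V m (gt (IAll ip))"
      unfolding msat_gt_IAll
    proof (intro allI impI)
      fix m' e assume "(m, m') \<in> R" "(m', e) \<in> E"
      then have "e \<in> qmax Y R"
        using assms m(1) qmax_upward_closed[OF R_trans_rel R_field] by blast
      moreover have "(x1, m') \<in> R"
        using \<open>(x1, y) \<in> R\<close> m(2) \<open>(m, m') \<in> R\<close> R_trans by blast
      then have "msat R E V e (gt (INeg (INeg ip)))"
        using nn \<open>(m', e) \<in> E\<close> unfolding msat_gt_IAll by blast
      ultimately show "msat R E V e (gt ip)"
        by (rule msat_gt_not_not_at_qmax)
    qed
    then show False
      using no_all m(2) by blast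
  qed
qed

definition box_dia :: "'a set \<Rightarrow> 'a set" where
  "box_dia N = {r\<in>Y. \<forall>s. (r, s) \<in> R \<longrightarrow> (\<exists>t. (s, t) \<in> R \<and> t \<in> N)}"

lemma clopenin_box_dia: "clopenin T N \<Longrightarrow> clopenin T (box_dia N)"
proof -
  assume "clopenin T N"
  moreover have "box_dia N = Y - R\<inverse> `` (Y - R\<inverse> `` N)"
    unfolding box_dia_def using R_in_Y by blast
  ultimately show ?thesis
    by (simp add: clopenin_diff clopenin_topspace clopenin_R_preimage)
qed

lemma msat_gt_not_not_compl_diff_box_dia:
  assumes "V 0 = Y - (N - box_dia N)" and "w \<in> Y"
  shows "msat R E V w (gt (INeg (INeg ip)))"
  unfolding msat_gt_INeg
proof (intro allI impI notI)
  fix w' assume "(w, w') \<in> R" and no_box: "\<forall>v. (w', v) \<in> R \<longrightarrow> \<not> msat R E V v (gt ip)"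
  obtain v where "(w', v) \<in> R"
    and "\<forall>u. (v, u) \<in> R \<longrightarrow> u \<in> N \<longrightarrow> (\<forall>s. (u, s) \<in> R \<longrightarrow> (\<exists>t. (s, t) \<in> R \<and> t \<in> N))"
    using S4_dia_box_imp_box_dia[OF R_trans_rel, of w' N] R_in_Y R_refl \<open>(w, w') \<in> R\<close> by blast
  then have "msat R E V v (gt ip)"
    using assms(1) R_in_Y unfolding box_dia_def by auto
  then show False
    using no_box \<open>(w', v) \<in> R\<close> by blast
qed

lemma E_qmax_subset_if_frame_valid_gt_kuroda:
  assumes valid: "frame_valid T R E (gt kuroda_axiom)"
  shows "E `` qmax Y R \<subseteq> qmax Y R"
proof
  fix y assume "y \<in> E `` qmax Y R"
  then obtain x where x: "x \<in> qmax Y R" "(x, y) \<in> E"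
    by blast
  then have "x \<in> Y" "y \<in> Y"
    using E_in_Y by blast+
  show "y \<in> qmax Y R"
  proof (rule ccontr)
    assume "y \<notin> qmax Y R"
    then obtain z where yz: "(y, z) \<in> R" "(z, y) \<notin> R"
      using \<open>y \<in> Y\<close> unfolding qmax_def by blast
    have "openin T (Y - R `` {z})"
      using closedin_R_image R_in_Y[OF yz(1)] by blast
    then obtain N where N: "clopenin T N" "y \<in> N" "N \<subseteq> Y - R `` {z}"
      using stone \<open>y \<in> Y\<close> yz(2) unfolding stone_space_def by blast
    define V :: "nat \<Rightarrow> 'a set" where "V = (\<lambda>_. Y - (N - box_dia N))"
    have V_clopen: "\<forall>n. clopenin T (V n)"
      unfolding V_def using N(1) clopenin_box_dia by (simp add: clopenin_diff clopenin_topspace)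
    have "y \<notin> V 0"
      using N yz(1) unfolding V_def box_dia_def by blast
    have "msat R E V x (gt (IAll (INeg (INeg ip))))"
      using msat_gt_not_not_compl_diff_box_dia[of V N] E_in_Y
      unfolding msat_gt_IAll V_def by blast
    then have "msat R E V x (gt (INeg (INeg (IAll ip))))"
      using valid V_clopen \<open>x \<in> Y\<close> R_refl
      unfolding frame_valid_def kuroda_axiom_def msat_gt_IImp by blast
    with x(1) have "msat R E V x (gt (IAll ip))"
      by (rule msat_gt_not_not_at_qmax)
    then have "y \<in> V 0"
      using \<open>x \<in> Y\<close> \<open>y \<in> Y\<close> x(2) R_refl unfolding msat_gt_IAll by auto
    with \<open>y \<notin> V 0\<close> show False
      by blast
  qed
qed

end

theorem theorem3p15:
  fixes T :: "'a topology" and R E :: "'a rel"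
  assumes "descriptive_MS4_frame T R E"
  shows "validates T R E GKur \<longleftrightarrow> E `` qmax (topspace T) R = qmax (topspace T) R"
proof -
  interpret descriptive_frame T R E
    using assms by (rule descriptive_frame.intro)
  have "qmax Y R \<subseteq> E `` qmax Y R"
    using E_refl unfolding qmax_def by blast
  then show ?thesis
    using validates_GKur_iff frame_valid_gt_kuroda_if_E_qmax
      E_qmax_subset_if_frame_valid_gt_kuroda by blast
qed

end
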